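(* Let $m_1,\ldots,m_s$ be positive integers. Put $a_1=(m_1,\ldots,m_s)$, $a_k=[m_{k-1},(m_k,\ldots,m_s)]$ for $k=2,\ldots,s-1$, and $a_s=[m_{s-1},m_s]$ (when $s\ge2$). Then $$\mathbb{Z}_{m_1}\times\cdots\times\mathbb{Z}_{m_s}\cong\mathbb{Z}_{a_1}\times\cdots\times\mathbb{Z}_{a_s}.$$
   Context: $\mathbb{Z}_m$ denotes a cyclic group of order $m$; $(\cdot,\ldots,\cdot)$ and $[\cdot,\ldots,\cdot]$ denote gcd and lcm. *)

theory Defs
  imports "HOL-Algebra.Algebra"
begin

definition a_seq :: "(nat \<Rightarrow> nat) \<Rightarrow> nat \<Rightarrow> nat \<Rightarrow> nat" where
  "a_seq m s k =
     (if k = 1 then Gcd (m ` {1..s})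
      else if k = s then lcm (m (s - 1)) (m s)
      else lcm (m (k - 1)) (Gcd (m ` {k..s})))"

end

theory Submission
  imports Defs
begin

(* Let G_k = gcd(m_k, ..., m_s); then a_1 = G_1 and a_k = lcm(m_(k-1), G_k) for k >= 2,
   since G_s = m_s.  Splitting m and n into coprime parts according to which of the two
   has the larger power of each prime, the Chinese remainder theorem gives
   Z_m x Z_n = Z_gcd(m,n) x Z_lcm(m,n).  Starting from m_1, ..., m_s, whose last entry is G_s,
   apply this to the factors at positions k-1 and k for k = s, ..., 2: the pair
   (m_(k-1), G_k) becomes (G_(k-1), a_k), and after the last step the factors are
   a_1, ..., a_s. *)

lemma integer_mod_group_mult_iso:
  fixes a b :: nat
  assumes "a > 0" "b > 0" "coprime a b"
  shows "integer_mod_group (a * b) \<cong> integer_mod_group a \<times>\<times> integer_mod_group b"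
proof -
  let ?Zab = "integer_mod_group (a * b)"
    and ?P = "integer_mod_group a \<times>\<times> integer_mod_group b"
  let ?f = "\<lambda>x::int. (x mod a, x mod b)"
  have hom: "?f \<in> hom ?Zab ?P"
  proof (rule homI)
    fix x y :: int
    have "(x + y) mod (a * b) mod a = (x + y) mod a" "(x + y) mod (a * b) mod b = (x + y) mod b"
      by (simp_all add: mod_mod_cancel)
    then show "?f (x \<otimes>\<^bsub>?Zab\<^esub> y) = ?f x \<otimes>\<^bsub>?P\<^esub> ?f y"
      by (simp add: mod_add_eq)
  qed (use assms in \<open>simp add: carrier_integer_mod_group\<close>)
  have inj: "inj_on ?f (carrier ?Zab)"
  proof (rule inj_onI)
    fix x y assume "x \<in> carrier ?Zab" "y \<in> carrier ?Zab" and "?f x = ?f y"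
    then have "0 \<le> x" "x < a * b" "0 \<le> y" "y < a * b" "int a dvd x - y" "int b dvd x - y"
      using assms by (auto simp: carrier_integer_mod_group mod_eq_dvd_iff)
    then have "int a * int b dvd x - y"
      using assms(3) by (simp add: divides_mult)
    with \<open>0 \<le> x\<close> \<open>x < a * b\<close> \<open>0 \<le> y\<close> \<open>y < a * b\<close> show "x = y"
      by (metis mod_eq_dvd_iff mod_pos_pos_trivial of_nat_mult)
  qed
  have "?f ` carrier ?Zab = carrier ?P"
  proof (rule card_subset_eq)
    show "?f ` carrier ?Zab \<subseteq> carrier ?P"
      using hom by (simp add: hom_def image_subset_iff_funcset)
    show "card (?f ` carrier ?Zab) = card (carrier ?P)"
      unfolding card_image[OF inj] using assms
      by (simp add: carrier_integer_mod_group card_cartesian_product flip: of_nat_mult)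
  qed (use assms in \<open>simp add: carrier_integer_mod_group\<close>)
  with hom inj show ?thesis
    by (auto simp: is_iso_def iso_def bij_betw_def)
qed

definition prime_part :: "(nat \<Rightarrow> bool) \<Rightarrow> nat \<Rightarrow> nat" where
  "prime_part P x = (\<Prod>p\<in>{p \<in> prime_factors x. P p}. p ^ multiplicity p x)"

lemma prime_part_pos: "prime_part P x > 0"
  unfolding prime_part_def by (intro prod_pos) (auto simp: in_prime_factors_iff prime_gt_0_nat)

lemma multiplicity_prime_part:
  assumes "Factorial_Ring.prime q"
  shows "multiplicity q (prime_part P x) = (if P q then multiplicity q x else 0)"
proof -
  have "multiplicity q (prime_part P x) =
      (if q \<in> {p \<in> prime_factors x. P p} then multiplicity q x else 0)"
    unfolding prime_part_def using assms
    by (intro multiplicity_prod_prime_powers) (auto simp: in_prime_factors_iff)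
  then show ?thesis
    using assms by (cases "x = 0") (auto simp: in_prime_factors_iff not_dvd_imp_multiplicity_0)
qed

lemma prime_part_mult_complement:
  assumes "x > 0"
  shows "prime_part P x * prime_part (\<lambda>p. \<not> P p) x = x"
proof (rule multiplicity_eq_nat)
  fix q :: nat assume "Factorial_Ring.prime q"
  then show "multiplicity q (prime_part P x * prime_part (\<lambda>p. \<not> P p) x) = multiplicity q x"
    by (simp add: prime_elem_multiplicity_mult_distrib prime_part_pos multiplicity_prime_part)
qed (use assms prime_part_pos in auto)

lemma coprime_prime_part_complement: "coprime (prime_part P x) (prime_part (\<lambda>p. \<not> P p) y)"
proof -
  have "gcd (prime_part P x) (prime_part (\<lambda>p. \<not> P p) y) = 1"
  proof (rule multiplicity_eq_nat)
    fix q :: nat assume "Factorial_Ring.prime q"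
    then show "multiplicity q (gcd (prime_part P x) (prime_part (\<lambda>p. \<not> P p) y))
               = multiplicity q 1"
      by (simp add: multiplicity_gcd prime_part_pos multiplicity_prime_part)
  qed (use prime_part_pos in auto)
  then show ?thesis
    by (simp add: coprime_iff_gcd_eq_1)
qed

lemma
  fixes m n :: nat
  assumes "m > 0" "n > 0"
  defines "P \<equiv> \<lambda>p. multiplicity p n \<le> multiplicity p m"
  shows lcm_eq_prime_parts: "lcm m n = prime_part P m * prime_part (\<lambda>p. \<not> P p) n"
    and gcd_eq_prime_parts: "gcd m n = prime_part (\<lambda>p. \<not> P p) m * prime_part P n"
proof -
  have pos: "lcm m n > 0" "gcd m n > 0"
    using assms by (simp_all add: lcm_pos_nat)
  show "lcm m n = prime_part P m * prime_part (\<lambda>p. \<not> P p) n"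
  proof (rule multiplicity_eq_nat)
    fix q :: nat assume "Factorial_Ring.prime q"
    with assms show "multiplicity q (lcm m n)
                     = multiplicity q (prime_part P m * prime_part (\<lambda>p. \<not> P p) n)"
      by (simp add: multiplicity_lcm prime_elem_multiplicity_mult_distrib prime_part_pos
          multiplicity_prime_part)
  qed (use pos prime_part_pos in auto)
  show "gcd m n = prime_part (\<lambda>p. \<not> P p) m * prime_part P n"
  proof (rule multiplicity_eq_nat)
    fix q :: nat assume "Factorial_Ring.prime q"
    with assms show "multiplicity q (gcd m n)
                     = multiplicity q (prime_part (\<lambda>p. \<not> P p) m * prime_part P n)"
      by (simp add: multiplicity_gcd prime_elem_multiplicity_mult_distrib prime_part_pos
          multiplicity_prime_part)
  qed (use pos prime_part_pos in auto)
qed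

lemma DirProd_interchange_iso: "(A \<times>\<times> B) \<times>\<times> (C \<times>\<times> D) \<cong> (A \<times>\<times> C) \<times>\<times> (B \<times>\<times> D)"
proof (rule is_isoI)
  show "(\<lambda>((a, b), (c, d)). ((a, c), (b, d)))
          \<in> iso ((A \<times>\<times> B) \<times>\<times> (C \<times>\<times> D)) ((A \<times>\<times> C) \<times>\<times> (B \<times>\<times> D))"
    by (auto simp: iso_def hom_def inj_on_def bij_betw_def image_def)
qed

lemma integer_mod_group_gcd_lcm_iso:
  fixes m n :: nat
  assumes "m > 0" "n > 0"
  shows "integer_mod_group m \<times>\<times> integer_mod_group n
         \<cong> integer_mod_group (gcd m n) \<times>\<times> integer_mod_group (lcm m n)"
proof -
  let ?Z = integer_mod_group
  define P where "P = (\<lambda>p. multiplicity p n \<le> multiplicity p m)"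
  \<comment> \<open>At each prime, m1 and n1 carry the larger prime power, m2 and n2 the smaller one.\<close>
  define m1 where "m1 = prime_part P m"
  define m2 where "m2 = prime_part (\<lambda>p. \<not> P p) m"
  define n1 where "n1 = prime_part (\<lambda>p. \<not> P p) n"
  define n2 where "n2 = prime_part P n"
  have pos: "m1 > 0" "m2 > 0" "n1 > 0" "n2 > 0"
    by (simp_all add: m1_def m2_def n1_def n2_def prime_part_pos)
  have coprime: "coprime m2 m1" "coprime n2 n1" "coprime m2 n2" "coprime m1 n1"
    unfolding m1_def m2_def n1_def n2_def
    using coprime_prime_part_complement[of "\<lambda>p. \<not> P p"] coprime_prime_part_complement[of P]
    by (simp_all add: coprime_commute)
  have "m = m2 * m1" "n = n2 * n1"
    using assms prime_part_mult_complement[of m P] prime_part_mult_complement[of n P]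
    by (simp_all add: m1_def m2_def n1_def n2_def mult.commute)
  then have "?Z m \<times>\<times> ?Z n \<cong> (?Z m2 \<times>\<times> ?Z m1) \<times>\<times> (?Z n2 \<times>\<times> ?Z n1)"
    using pos coprime by (auto intro!: group.DirProd_iso_trans integer_mod_group_mult_iso)
  also have "\<dots> \<cong> (?Z m2 \<times>\<times> ?Z n2) \<times>\<times> (?Z m1 \<times>\<times> ?Z n1)"
    by (rule DirProd_interchange_iso)
  also have "\<dots> \<cong> ?Z (m2 * n2) \<times>\<times> ?Z (m1 * n1)"
  proof (rule group.iso_sym)
    show "?Z (m2 * n2) \<times>\<times> ?Z (m1 * n1) \<cong> (?Z m2 \<times>\<times> ?Z n2) \<times>\<times> (?Z m1 \<times>\<times> ?Z n1)"
      using pos coprime by (simp add: group.DirProd_iso_trans integer_mod_group_mult_iso)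
  qed (simp add: DirProd_group)
  also have "\<dots> = ?Z (gcd m n) \<times>\<times> ?Z (lcm m n)"
    using gcd_eq_prime_parts[OF assms] lcm_eq_prime_parts[OF assms]
    by (simp add: m1_def m2_def n1_def n2_def P_def)
  finally show ?thesis .
qed

lemma product_group_cong:
  assumes "\<And>i. i \<in> I \<Longrightarrow> G i = H i"
  shows "product_group I G = product_group I H"
  unfolding product_group_def using assms
  by (simp cong: PiE_cong restrict_cong)

lemma product_group_insert_iso:
  assumes "i \<notin> I"
  shows "product_group (insert i I) G \<cong> G i \<times>\<times> product_group I G"
proof (rule is_isoI, rule group_isomorphisms_imp_iso)
  show "group_isomorphisms (product_group (insert i I) G) (G i \<times>\<times> product_group I G)
          (\<lambda>x. (x i, restrict x I)) (\<lambda>(a, y). y(i := a))"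
    unfolding group_isomorphisms_def using assms
    by (auto simp: hom_def PiE_iff fun_eq_iff extensional_def split: if_split_asm)
qed

lemma DirProd_reassoc_iso: "A \<times>\<times> (B \<times>\<times> C) \<cong> (A \<times>\<times> B) \<times>\<times> C"
proof (rule is_isoI)
  show "(\<lambda>(a, b, c). ((a, b), c)) \<in> iso (A \<times>\<times> (B \<times>\<times> C)) ((A \<times>\<times> B) \<times>\<times> C)"
    by (auto simp: iso_def hom_def inj_on_def bij_betw_def image_def)
qed

lemma product_group_replace_two_factors_iso:
  assumes "i \<in> I" "j \<in> I" "i \<noteq> j"
    and eq: "\<And>k. k \<in> I \<Longrightarrow> k \<noteq> i \<Longrightarrow> k \<noteq> j \<Longrightarrow> G k = H k"
    and iso: "G i \<times>\<times> G j \<cong> H i \<times>\<times> H j"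
    and groups: "\<And>k. k \<in> I \<Longrightarrow> group (G k)" "\<And>k. k \<in> I \<Longrightarrow> group (H k)"
  shows "product_group I G \<cong> product_group I H"
proof -
  define J where "J = I - {i, j}"
  have I: "I = insert i (insert j J)" "i \<notin> insert j J" "j \<notin> J"
    using assms(1-3) by (auto simp: J_def)
  have split: "product_group I F \<cong> (F i \<times>\<times> F j) \<times>\<times> product_group J F"
    if F: "\<And>k. k \<in> I \<Longrightarrow> group (F k)" for F
  proof -
    have "product_group I F \<cong> F i \<times>\<times> product_group (insert j J) F"
      unfolding I(1) using I(2) by (rule product_group_insert_iso)
    also have "\<dots> \<cong> F i \<times>\<times> (F j \<times>\<times> product_group J F)"
      using I(3) by (intro group.DirProd_iso_trans iso_refl product_group_insert_iso F assms(1))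
    also have "\<dots> \<cong> (F i \<times>\<times> F j) \<times>\<times> product_group J F"
      by (rule DirProd_reassoc_iso)
    finally show ?thesis .
  qed
  have "product_group I G \<cong> (G i \<times>\<times> G j) \<times>\<times> product_group J G"
    using groups(1) by (rule split)
  also have "product_group J G = product_group J H"
    using eq by (intro product_group_cong) (simp add: J_def)
  also have "(G i \<times>\<times> G j) \<times>\<times> product_group J H \<cong> (H i \<times>\<times> H j) \<times>\<times> product_group J H"
    by (intro group.DirProd_iso_trans iso iso_refl DirProd_group groups assms(1,2))
  also have "\<dots> \<cong> product_group I H"
  proof (rule group.iso_sym)
    show "group (product_group I H)"
      using groups(2) by simp
  qed (use groups(2) in \<open>rule split\<close>)
  finally show ?thesis .
qed

definition tail_Gcd :: "(nat \<Rightarrow> nat) \<Rightarrow> nat \<Rightarrow> nat \<Rightarrow> nat" where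
  "tail_Gcd m s k = Gcd (m ` {k..s})"

lemma tail_Gcd_last: "tail_Gcd m s s = m s"
  by (simp add: tail_Gcd_def)

lemma tail_Gcd_Suc: "k < s \<Longrightarrow> tail_Gcd m s k = gcd (m k) (tail_Gcd m s (Suc k))"
  by (simp add: tail_Gcd_def Icc_eq_insert_lb_nat)

lemma tail_Gcd_pos: "k \<le> s \<Longrightarrow> m k > 0 \<Longrightarrow> tail_Gcd m s k > 0"
  unfolding tail_Gcd_def
  by (metis Gcd_0_iff atLeastAtMost_iff gr0I image_eqI order_refl singletonD subsetD)

lemma a_seq_eq_lcm_tail_Gcd:
  "1 < k \<Longrightarrow> k \<le> s \<Longrightarrow> a_seq m s k = lcm (m (k - 1)) (tail_Gcd m s k)"
  by (auto simp: a_seq_def tail_Gcd_def)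

(* Equal to m on {1..s} for i = s and to a_seq for i = 1; passing from i + 1 to i
   changes only the factors at positions i and i + 1. *)
definition a_seq_from :: "(nat \<Rightarrow> nat) \<Rightarrow> nat \<Rightarrow> nat \<Rightarrow> nat \<Rightarrow> nat" where
  "a_seq_from m s i k = (if k < i then m k else if k = i then tail_Gcd m s i else a_seq m s k)"

lemma product_group_a_seq_from_iso:
  assumes "1 \<le> i" "i \<le> s" and pos: "\<And>k. k \<in> {1..s} \<Longrightarrow> m k > 0"
  shows "product_group {1..s} (\<lambda>k. integer_mod_group (m k))
         \<cong> product_group {1..s} (\<lambda>k. integer_mod_group (a_seq_from m s i k))"
  using assms(2)
proof (induction rule: inc_induct)
  case base
  have "product_group {1..s} (\<lambda>k. integer_mod_group (a_seq_from m s s k))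
        = product_group {1..s} (\<lambda>k. integer_mod_group (m k))"
    by (intro product_group_cong) (auto simp: a_seq_from_def tail_Gcd_last)
  then show ?case by simp
next
  case (step n)
  let ?Z = integer_mod_group and ?T = "tail_Gcd m s (Suc n)"
  have "m n > 0" "?T > 0"
    using step.hyps assms(1) pos by (auto intro: tail_Gcd_pos)
  then have "?Z (m n) \<times>\<times> ?Z ?T \<cong> ?Z (gcd (m n) ?T) \<times>\<times> ?Z (lcm (m n) ?T)"
    by (rule integer_mod_group_gcd_lcm_iso)
  then have "product_group {1..s} (\<lambda>k. ?Z (a_seq_from m s (Suc n) k))
             \<cong> product_group {1..s} (\<lambda>k. ?Z (a_seq_from m s n k))"
    using step.hyps assms(1)
    by (intro product_group_replace_two_factors_iso[where i = n and j = "Suc n"])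
       (auto simp: a_seq_from_def tail_Gcd_Suc a_seq_eq_lcm_tail_Gcd)
  with step.IH show ?case
    by (rule iso_trans)
qed

theorem proposition1:
  fixes m :: "nat \<Rightarrow> nat" and s :: nat
  assumes "s \<ge> 1" and "\<And>k. k \<in> {1..s} \<Longrightarrow> m k > 0"
  shows "product_group {1..s} (\<lambda>k. integer_mod_group (m k))
         \<cong> product_group {1..s} (\<lambda>k. integer_mod_group (a_seq m s k))"
proof -
  have "product_group {1..s} (\<lambda>k. integer_mod_group (m k))
        \<cong> product_group {1..s} (\<lambda>k. integer_mod_group (a_seq_from m s 1 k))"
    using assms by (intro product_group_a_seq_from_iso) auto
  also have "\<dots> = product_group {1..s} (\<lambda>k. integer_mod_group (a_seq m s k))"
    by (intro product_group_cong) (simp add: a_seq_from_def a_seq_def tail_Gcd_def)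
  finally show ?thesis .
qed

end
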